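(* Let $n\ge3$ and consider an ontological model in which, for each ontic state $\lambda$, there are response functions $\xi(\cdot|M_i,\lambda)$ on $\{0,1\}$ for binary measurements $M_1,\dots,M_n$ and $\xi(\cdot,\cdot|M_{i,i+1},\lambda)$ on $\{0,1\}^2$ for joint measurements $M_{i,i+1}$ ($i=1,\dots,n$, indices mod $n$), satisfying measurement noncontextuality in the form $\sum_{X_{i+1}}\xi(X_i,X_{i+1}|M_{i,i+1},\lambda)=\xi(X_i|M_i,\lambda)$ and $\sum_{X_i}\xi(X_i,X_{i+1}|M_{i,i+1},\lambda)=\xi(X_{i+1}|M_{i+1},\lambda)$ for all $i$ and all outcomes. Let $\eta(M_i,\lambda)=2\max_{X\in\{0,1\}}\xi(X|M_i,\lambda)-1$. Then for odd $n$, $$\xi(\mathrm{anti}|M_*,\lambda)\equiv\frac1n\sum_{i=1}^n\xi(X_i\ne X_{i+1}|M_{i,i+1},\lambda)\le1-\frac1{n^2}\sum_{i=1}^n\eta(M_i,\lambda),$$ and for even $n\ge4$, $$\xi(\mathrm{chained}|M_*,\lambda)\equiv\frac1n\sum_{i=1}^{n-1}\xi(X_i=X_{i+1}|M_{i,i+1},\lambda)+\frac1n\xi(X_n\ne X_1|M_{n1},\lambda)\le1-\frac1{n^2}\sum_{i=1}^n\eta(M_i,\lambda).$$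
   Context: Here $\xi(X_i\neq X_{i+1}|M_{i,i+1},\lambda)=\xi(0,1|M_{i,i+1},\lambda)+\xi(1,0|M_{i,i+1},\lambda)$ and $\xi(X_i=X_{i+1}|M_{i,i+1},\lambda)=\xi(0,0|M_{i,i+1},\lambda)+\xi(1,1|M_{i,i+1},\lambda)$; all response functions are probability distributions. The same bounds hold for any second family of joint measurements $M'_{i,i+1}$ with the same marginal conditions. *)

theory Defs
  imports Complex_Main
begin

text \<open>Measurements are indexed 1..n; outcomes 0/1 are encoded as False/True.
  The cyclic successor: nxt n i = i+1 for i<n and nxt n n = 1.\<close>
definition nxt :: "nat \<Rightarrow> nat \<Rightarrow> nat" where
  "nxt n i = (i mod n) + 1"

text \<open>xi1 i x = xi(x|M_i,lambda);  xi2 i x y = xi(x,y|M_{i,i+1},lambda).\<close>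
definition eta :: "(nat \<Rightarrow> bool \<Rightarrow> real) \<Rightarrow> nat \<Rightarrow> real" where
  "eta xi1 i = 2 * max (xi1 i False) (xi1 i True) - 1"

definition xi_neq :: "(nat \<Rightarrow> bool \<Rightarrow> bool \<Rightarrow> real) \<Rightarrow> nat \<Rightarrow> real" where
  "xi_neq xi2 i = xi2 i False True + xi2 i True False"

definition xi_eq :: "(nat \<Rightarrow> bool \<Rightarrow> bool \<Rightarrow> real) \<Rightarrow> nat \<Rightarrow> real" where
  "xi_eq xi2 i = xi2 i False False + xi2 i True True"

definition xi_anti :: "nat \<Rightarrow> (nat \<Rightarrow> bool \<Rightarrow> bool \<Rightarrow> real) \<Rightarrow> real" where
  "xi_anti n xi2 = (1 / real n) * (\<Sum>i=1..n. xi_neq xi2 i)"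

definition xi_chained :: "nat \<Rightarrow> (nat \<Rightarrow> bool \<Rightarrow> bool \<Rightarrow> real) \<Rightarrow> real" where
  "xi_chained n xi2 = (1 / real n) * (\<Sum>i=1..n-1. xi_eq xi2 i) + (1 / real n) * xi_neq xi2 n"

end

theory Submission
  imports Defs
begin

text \<open>Write \<open>a\<^sub>i = \<xi>(1|M\<^sub>i) - \<xi>(0|M\<^sub>i)\<close>, so that \<open>\<eta>(M\<^sub>i) = |a\<^sub>i|\<close>. A joint distribution with
  marginal biases \<open>a, b\<close> gives probability at most \<open>1 - |a + b|/2\<close> to disagreement and at most
  \<open>1 - |a - b|/2\<close> to agreement. Both Bell expressions put signs \<open>s\<^sub>j = \<plusminus>1\<close> on the edges of
  the cycle \<open>1, \<dots>, n\<close> whose product is \<open>-1\<close>; going once around the cycle then shows that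
  every \<open>2|a\<^sub>k|\<close> is bounded by the total defect \<open>\<Sum>\<^sub>j |a\<^sub>j - s\<^sub>j a\<^sub>j\<^sub>+\<^sub>1|\<close>, and averaging over
  \<open>k\<close> yields the bound.\<close>

definition bias :: "(bool \<Rightarrow> real) \<Rightarrow> real" where
  "bias q = q True - q False"

lemma eta_eq_abs_bias:
  assumes "xi1 i False + xi1 i True = 1"
  shows "eta xi1 i = \<bar>bias (xi1 i)\<bar>"
  using assms unfolding eta_def bias_def by (simp add: max_def)

lemma disagreement_le_bias:
  fixes p :: "bool \<Rightarrow> bool \<Rightarrow> real"
  assumes nonneg: "\<And>x y. p x y \<ge> 0"
    and marg1: "\<And>x. p x False + p x True = q1 x"
    and marg2: "\<And>y. p False y + p True y = q2 y"
    and norm: "q1 False + q1 True = 1"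
  shows "p False True + p True False \<le> 1 - \<bar>bias q1 + bias q2\<bar> / 2"
proof -
  have "bias q1 + bias q2 = 2 * (p True True - p False False)"
    unfolding bias_def by (simp flip: marg1 marg2)
  then have "\<bar>bias q1 + bias q2\<bar> / 2 = \<bar>p True True - p False False\<bar>"
    by (simp only: abs_mult) simp
  moreover have "\<bar>p True True - p False False\<bar> \<le> p True True + p False False"
    using nonneg[of True True] nonneg[of False False] by linarith
  ultimately show ?thesis
    using norm marg1[of True] marg1[of False] by linarith
qed

lemma agreement_le_bias:
  fixes p :: "bool \<Rightarrow> bool \<Rightarrow> real"
  assumes nonneg: "\<And>x y. p x y \<ge> 0"
    and marg1: "\<And>x. p x False + p x True = q1 x"
    and marg2: "\<And>y. p False y + p True y = q2 y"
    and norm: "q1 False + q1 True = 1"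
  shows "p False False + p True True \<le> 1 - \<bar>bias q1 - bias q2\<bar> / 2"
proof -
  have "bias q1 - bias q2 = 2 * (p True False - p False True)"
    unfolding bias_def by (simp flip: marg1 marg2)
  then have "\<bar>bias q1 - bias q2\<bar> / 2 = \<bar>p True False - p False True\<bar>"
    by (simp only: abs_mult) simp
  moreover have "\<bar>p True False - p False True\<bar> \<le> p True False + p False True"
    using nonneg[of True False] nonneg[of False True] by linarith
  ultimately show ?thesis
    using norm marg1[of True] marg1[of False] by linarith
qed

lemma signed_path_bound:
  fixes a s :: "nat \<Rightarrow> real"
  assumes unit: "\<And>j. \<bar>s j\<bar> = 1" and "m \<le> k"
  shows "\<bar>a m - (\<Prod>j=m..<k. s j) * a k\<bar> \<le> (\<Sum>j=m..<k. \<bar>a j - s j * a (Suc j)\<bar>)"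
  using \<open>m \<le> k\<close>
proof (induction k rule: dec_induct)
  case base
  then show ?case by simp
next
  case (step k)
  let ?P = "\<Prod>j=m..<k. s j"
  have "\<bar>?P\<bar> = 1"
    by (simp add: abs_prod unit)
  have "a m - (\<Prod>j=m..<Suc k. s j) * a (Suc k) = (a m - ?P * a k) + ?P * (a k - s k * a (Suc k))"
    using step.hyps by (simp add: algebra_simps)
  also have "\<bar>\<dots>\<bar> \<le> \<bar>a m - ?P * a k\<bar> + \<bar>?P * (a k - s k * a (Suc k))\<bar>"
    by (rule abs_triangle_ineq)
  also have "\<bar>?P * (a k - s k * a (Suc k))\<bar> = \<bar>a k - s k * a (Suc k)\<bar>"
    using \<open>\<bar>?P\<bar> = 1\<close> by (simp add: abs_mult)
  finally show ?case
    using step.IH step.hyps by simp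
qed

lemma frustrated_cycle_bound:
  fixes a s :: "nat \<Rightarrow> real"
  assumes unit: "\<And>j. \<bar>s j\<bar> = 1"
    and frustrated: "(\<Prod>j=1..n. s j) = -1"
    and k: "k \<in> {1..n}"
  shows "2 * \<bar>a k\<bar> \<le> (\<Sum>j=1..n. \<bar>a j - s j * a (nxt n j)\<bar>)"
proof -
  let ?P = "\<lambda>u v. \<Prod>j=u..<v. s j" and ?D = "\<lambda>u v. \<Sum>j=u..<v. \<bar>a j - s j * a (Suc j)\<bar>"
  have n: "1 \<le> n" using k by simp
  have cycle_sum: "(\<Sum>j=1..n. \<bar>a j - s j * a (nxt n j)\<bar>) = ?D 1 k + ?D k n + \<bar>a n - s n * a 1\<bar>"
  proof -
    have "(\<Sum>j=1..n. \<bar>a j - s j * a (nxt n j)\<bar>) = (\<Sum>j=1..<n. \<bar>a j - s j * a (nxt n j)\<bar>) + \<bar>a n - s n * a 1\<bar>"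
      using n by (simp add: nxt_def flip: atLeastLessThanSuc_atLeastAtMost)
    also have "(\<Sum>j=1..<n. \<bar>a j - s j * a (nxt n j)\<bar>) = ?D 1 n"
      by (rule sum.cong) (auto simp: nxt_def)
    also have "?D 1 n = ?D 1 k + ?D k n"
      using k by (simp add: sum.atLeastLessThan_concat)
    finally show ?thesis .
  qed
  have "(\<Prod>j=1..n. s j) = ?P 1 n * s n"
    using n by (simp flip: atLeastLessThanSuc_atLeastAtMost)
  also have "?P 1 n = ?P 1 k * ?P k n"
    using k by (simp add: prod.atLeastLessThan_concat)
  finally have "?P k n * s n * ?P 1 k = -1"
    using frustrated by (simp add: ac_simps)
  then have "2 * a k = (a k - ?P k n * a n) + ?P k n * (a n - s n * a 1) + ?P k n * s n * (a 1 - ?P 1 k * a k)"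
    by (simp add: algebra_simps)
  also have "\<bar>\<dots>\<bar> \<le> \<bar>a k - ?P k n * a n\<bar> + \<bar>?P k n * (a n - s n * a 1)\<bar>
      + \<bar>?P k n * s n * (a 1 - ?P 1 k * a k)\<bar>"
    using abs_triangle_ineq[of "a k - ?P k n * a n" "?P k n * (a n - s n * a 1)"]
      abs_triangle_ineq[of "a k - ?P k n * a n + ?P k n * (a n - s n * a 1)"
        "?P k n * s n * (a 1 - ?P 1 k * a k)"]
    by linarith
  also have "\<dots> = \<bar>a k - ?P k n * a n\<bar> + \<bar>a n - s n * a 1\<bar> + \<bar>a 1 - ?P 1 k * a k\<bar>"
    by (simp add: abs_mult abs_prod unit)
  also have "\<dots> \<le> ?D k n + \<bar>a n - s n * a 1\<bar> + ?D 1 k"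
  proof -
    have "k \<le> n" "1 \<le> k"
      using k by auto
    then show ?thesis
      using signed_path_bound[where a = a and s = s, OF unit, of k n]
        signed_path_bound[where a = a and s = s, OF unit, of 1 k]
      by linarith
  qed
  finally show ?thesis
    using cycle_sum by (simp add: abs_mult)
qed

lemma frustrated_cycle_average_bound:
  fixes a s c :: "nat \<Rightarrow> real"
  assumes "n > 0"
    and unit: "\<And>j. \<bar>s j\<bar> = 1"
    and frustrated: "(\<Prod>j=1..n. s j) = -1"
    and edge: "\<And>j. j \<in> {1..n} \<Longrightarrow> c j \<le> 1 - \<bar>a j - s j * a (nxt n j)\<bar> / 2"
  shows "1 / real n * (\<Sum>j=1..n. c j) \<le> 1 - 1 / real n ^ 2 * (\<Sum>j=1..n. \<bar>a j\<bar>)"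
proof -
  define D where "D = (\<Sum>j=1..n. \<bar>a j - s j * a (nxt n j)\<bar>)"
  have "(\<Sum>j=1..n. c j) \<le> (\<Sum>j=1..n. 1 - \<bar>a j - s j * a (nxt n j)\<bar> / 2)"
    by (rule sum_mono) (rule edge)
  then have sum_c: "(\<Sum>j=1..n. c j) \<le> real n - D / 2"
    by (simp add: D_def sum_subtractf sum_divide_distrib)
  have "(\<Sum>k=1..n. 2 * \<bar>a k\<bar>) \<le> (\<Sum>k=1..n. D)"
    unfolding D_def by (rule sum_mono) (rule frustrated_cycle_bound[OF unit frustrated])
  then have "2 * (\<Sum>k=1..n. \<bar>a k\<bar>) \<le> real n * D"
    by (simp add: sum_distrib_left)
  then have "1 - D / (2 * real n) \<le> 1 - 1 / real n ^ 2 * (\<Sum>j=1..n. \<bar>a j\<bar>)"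
    using \<open>n > 0\<close> by (simp add: field_simps power2_eq_square)
  moreover have "1 / real n * (\<Sum>j=1..n. c j) \<le> 1 - D / (2 * real n)"
    using sum_c \<open>n > 0\<close> by (simp add: field_simps)
  ultimately show ?thesis
    by linarith
qed

theorem mainTheorem11:
  fixes n :: nat
    and xi1 :: "'l \<Rightarrow> nat \<Rightarrow> bool \<Rightarrow> real"
    and xi2 :: "'l \<Rightarrow> nat \<Rightarrow> bool \<Rightarrow> bool \<Rightarrow> real"
  assumes n3: "n \<ge> 3"
    and xi1_nonneg: "\<And>l i x. i \<in> {1..n} \<Longrightarrow> xi1 l i x \<ge> 0"
    and xi1_norm: "\<And>l i. i \<in> {1..n} \<Longrightarrow> xi1 l i False + xi1 l i True = 1"
    and xi2_nonneg: "\<And>l i x y. i \<in> {1..n} \<Longrightarrow> xi2 l i x y \<ge> 0"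
    and xi2_norm: "\<And>l i. i \<in> {1..n} \<Longrightarrow>
        xi2 l i False False + xi2 l i False True + xi2 l i True False + xi2 l i True True = 1"
    and marg1: "\<And>l i x. i \<in> {1..n} \<Longrightarrow> xi2 l i x False + xi2 l i x True = xi1 l i x"
    and marg2: "\<And>l i y. i \<in> {1..n} \<Longrightarrow> xi2 l i False y + xi2 l i True y = xi1 l (nxt n i) y"
  shows "\<forall>l. (odd n \<longrightarrow>
              xi_anti n (xi2 l) \<le> 1 - (1 / real n ^ 2) * (\<Sum>i=1..n. eta (xi1 l) i))
          \<and> (even n \<longrightarrow>
              xi_chained n (xi2 l) \<le> 1 - (1 / real n ^ 2) * (\<Sum>i=1..n. eta (xi1 l) i))"
proof (intro allI conjI impI)
  fix l
  define a where "a j = bias (xi1 l j)" for j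
  have sum_eta: "(\<Sum>i=1..n. eta (xi1 l) i) = (\<Sum>i=1..n. \<bar>a i\<bar>)"
    by (rule sum.cong) (simp_all add: a_def eta_eq_abs_bias xi1_norm)
  have neq: "xi_neq (xi2 l) i \<le> 1 - \<bar>a i + a (nxt n i)\<bar> / 2" if "i \<in> {1..n}" for i
    unfolding xi_neq_def a_def
    by (rule disagreement_le_bias) (use that xi2_nonneg marg1 marg2 xi1_norm in auto)
  have eq: "xi_eq (xi2 l) i \<le> 1 - \<bar>a i - a (nxt n i)\<bar> / 2" if "i \<in> {1..n}" for i
    unfolding xi_eq_def a_def
    by (rule agreement_le_bias) (use that xi2_nonneg marg1 marg2 xi1_norm in auto)
  have n: "n > 0" using n3 by simp
  show "xi_anti n (xi2 l) \<le> 1 - 1 / real n ^ 2 * (\<Sum>i=1..n. eta (xi1 l) i)" if "odd n"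
    unfolding xi_anti_def sum_eta
    by (rule frustrated_cycle_average_bound[OF n, where s = "\<lambda>_. -1"]) (use neq \<open>odd n\<close> in auto)
  show "xi_chained n (xi2 l) \<le> 1 - 1 / real n ^ 2 * (\<Sum>i=1..n. eta (xi1 l) i)" if "even n"
  proof -
    \<comment> \<open>The chained bound holds for every \<open>n\<close>.\<close>
    let ?s = "\<lambda>j. if j = n then -1 else 1 :: real"
    let ?c = "\<lambda>j. if j = n then xi_neq (xi2 l) j else xi_eq (xi2 l) j"
    have "xi_chained n (xi2 l) = 1 / real n * (\<Sum>j=1..n. ?c j)"
      using n by (cases n) (simp_all add: xi_chained_def sum.cl_ivl_Suc distrib_left)
    also have "\<dots> \<le> 1 - 1 / real n ^ 2 * (\<Sum>j=1..n. \<bar>a j\<bar>)"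
      by (rule frustrated_cycle_average_bound[OF n, where s = ?s])
        (use n neq eq in \<open>auto simp: prod.If_cases\<close>)
    finally show ?thesis
      unfolding sum_eta .
  qed
qed

end
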